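(* Let $S$ be a semidomain that is additively reduced, additively Furstenberg, and satisfies $\mathscr{A}_+(S)=S^\times$, and let $G$ be a torsion-free abelian group. Let $f=s_0x^{g_0}+s_1x^{g_1}+s_2x^{g_2}\in S[G]$ with $s_0,s_1,s_2\in S\setminus\{0\}$ and $g_0>g_1>g_2$ in $G$. If $s_0,s_1,s_2\in S^\times$ then $f$ is irreducible; otherwise $f$ is the sum of two irreducible elements of $S[G]$.
   Context: A semidomain is a subsemiring (containing $0$ and $1$) of an integral domain; $S^\times$ is the unit group of the multiplicative monoid $S\setminus\{0\}$. $S$ is additively reduced if $0$ is the only invertible element of $(S,+)$. An additive atom is a nonzero $a\in S$ with $a=b+c$ implying $b=0$ or $c=0$; $\mathscr{A}_+(S)$ is the set of additive atoms. $S$ is additively Furstenberg if every nonzero $s\in S$ equals $a+t$ with $a\in\mathscr{A}_+(S)$, $t\in S$. $G$ carries a fixed total order compatible with addition. $S[G]$ is the semidomain of formal finite sums $\sum_{g\in G}s_gx^g$ with polynomial operations. $f\in S[G]$ is irreducible if it is nonzero, a nonunit, and $f=pq$ implies $p$ or $q$ is a unit of $S[G]$. *)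

theory Defs
  imports Main "HOL-Library.Poly_Mapping"
begin

definition semidomain :: "'a::idom set \<Rightarrow> bool" where
  "semidomain S \<longleftrightarrow> 0 \<in> S \<and> 1 \<in> S \<and>
     (\<forall>a\<in>S. \<forall>b\<in>S. a + b \<in> S) \<and> (\<forall>a\<in>S. \<forall>b\<in>S. a * b \<in> S)"

definition sunits :: "'a::idom set \<Rightarrow> 'a set" where
  "sunits S = {u \<in> S - {0}. \<exists>v\<in>S - {0}. u * v = 1}"

definition add_reduced :: "'a::idom set \<Rightarrow> bool" where
  "add_reduced S \<longleftrightarrow> (\<forall>a\<in>S. (\<exists>b\<in>S. a + b = 0) \<longrightarrow> a = 0)"

definition add_atoms :: "'a::idom set \<Rightarrow> 'a set" where
  "add_atoms S = {a \<in> S. a \<noteq> 0 \<and>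
      (\<forall>b\<in>S. \<forall>c\<in>S. a = b + c \<longrightarrow> b = 0 \<or> c = 0)}"

definition add_furstenberg :: "'a::idom set \<Rightarrow> bool" where
  "add_furstenberg S \<longleftrightarrow>
     (\<forall>s\<in>S. s \<noteq> 0 \<longrightarrow> (\<exists>a\<in>add_atoms S. \<exists>t\<in>S. s = a + t))"

(* S[G]: finitely supported functions G -> S, with the convolution product
   (the multiplication of the poly_mapping type). *)
definition monoid_sr :: "'a::idom set \<Rightarrow> ('g::comm_monoid_add \<Rightarrow>\<^sub>0 'a) set" where
  "monoid_sr S = {p. \<forall>g. Poly_Mapping.lookup p g \<in> S}"

definition unit_sr :: "'a::idom set \<Rightarrow> ('g::comm_monoid_add \<Rightarrow>\<^sub>0 'a) \<Rightarrow> bool" where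
  "unit_sr S u \<longleftrightarrow> u \<in> monoid_sr S \<and> (\<exists>v\<in>monoid_sr S. u * v = 1)"

definition irreducible_sr :: "'a::idom set \<Rightarrow> ('g::comm_monoid_add \<Rightarrow>\<^sub>0 'a) \<Rightarrow> bool" where
  "irreducible_sr S f \<longleftrightarrow> f \<in> monoid_sr S \<and> f \<noteq> 0 \<and> \<not> unit_sr S f \<and>
     (\<forall>p\<in>monoid_sr S. \<forall>q\<in>monoid_sr S. f = p * q \<longrightarrow> unit_sr S p \<or> unit_sr S q)"

end

theory Submission imports Defs begin

text \<open>
  Over an additively reduced semidomain no cancellation occurs in products of \<open>S[G]\<close>,
  so the support of \<open>p * q\<close> is the sumset of the supports. Hence units are monomials,
  and a monomial factor of an element with a unit coefficient is itself a unit. If both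
  factors of \<open>f = p * q\<close> have two exponents \<open>l\<^sub>1 < l\<^sub>2\<close> and \<open>r\<^sub>1 < r\<^sub>2\<close>, then the four sums
  \<open>l\<^sub>i + r\<^sub>j\<close> lie in the support of \<open>f\<close> and both mixed sums lie strictly between
  \<open>l\<^sub>1 + r\<^sub>1\<close> and \<open>l\<^sub>2 + r\<^sub>2\<close>: a binomial has too few exponents for this, and for a trinomial both mixed sums must be the middle
  exponent, whose coefficient then splits into two nonzero summands and is no additive atom.
  If some coefficient of the trinomial is not a unit, the Furstenberg property splits it
  as a unit (= additive atom) plus a nonzero rest, and the terms can be regrouped into two
  binomials, or a binomial and a trinomial with unit middle coefficient, each of which has
  a unit coefficient.
\<close>

section \<open>Semidomains\<close>

lemma sum_mem_semidomain:
  assumes "semidomain S" and "\<And>i. i \<in> I \<Longrightarrow> h i \<in> S"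
  shows "sum h I \<in> S"
proof (cases "finite I")
  case True
  then show ?thesis using assms(2)
    by (induction I rule: finite_induct) (use assms(1) in \<open>auto simp: semidomain_def\<close>)
qed (use assms(1) in \<open>simp add: semidomain_def\<close>)

lemma add_reduced_add_eq_0_iff:
  assumes "add_reduced S" and "a \<in> S" and "b \<in> S"
  shows "a + b = 0 \<longleftrightarrow> a = 0 \<and> b = 0"
  using assms unfolding add_reduced_def by auto

lemma add_reduced_sum_eq_0_iff:
  assumes "semidomain S" and "add_reduced S" and "finite I" and "\<And>i. i \<in> I \<Longrightarrow> h i \<in> S"
  shows "sum h I = 0 \<longleftrightarrow> (\<forall>i\<in>I. h i = 0)"
  using assms(3,4)
proof (induction I rule: finite_induct)
  case (insert x F)
  have "sum h F \<in> S" by (rule sum_mem_semidomain[OF assms(1)]) (use insert.prems in auto)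
  then show ?case
    using insert add_reduced_add_eq_0_iff[OF assms(2), of "h x" "sum h F"] by auto
qed simp

lemma add_furstenberg_split_off_unit:
  assumes "add_furstenberg S" and "add_atoms S = sunits S"
    and "s \<in> S - {0}" and "s \<notin> sunits S"
  obtains u t where "u \<in> sunits S" and "t \<in> S - {0}" and "s = u + t"
proof -
  obtain u t where u: "u \<in> add_atoms S" and t: "t \<in> S" and s: "s = u + t"
    using assms(1,3) unfolding add_furstenberg_def by blast
  have "u \<in> sunits S" using u assms(2) by simp
  moreover from this have "t \<noteq> 0" using s assms(4) by auto
  ultimately show thesis using that t s by blast
qed

section \<open>Supports of products in \<open>S[G]\<close>\<close>

lemma lookup_mult_ab_group:
  fixes p q :: "'g::ab_group_add \<Rightarrow>\<^sub>0 'a::comm_semiring_0"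
  shows "Poly_Mapping.lookup (p * q) k =
    (\<Sum>l\<in>Poly_Mapping.keys p. Poly_Mapping.lookup p l * Poly_Mapping.lookup q (k - l))"
proof -
  have inner: "(\<Sum>r. Poly_Mapping.lookup q r when k = l + r) = Poly_Mapping.lookup q (k - l)" for l
  proof -
    have "(\<lambda>r. Poly_Mapping.lookup q r when k = l + r) =
        (\<lambda>r. if r = k - l then Poly_Mapping.lookup q r else 0)"
      by (auto simp: fun_eq_iff when_def algebra_simps)
    then show ?thesis by (simp only: Sum_any.delta)
  qed
  have "Poly_Mapping.lookup (p * q) k = (\<Sum>l. Poly_Mapping.lookup p l * Poly_Mapping.lookup q (k - l))"
    by (simp add: lookup_mult inner)
  also have "\<dots> = (\<Sum>l\<in>Poly_Mapping.keys p. Poly_Mapping.lookup p l * Poly_Mapping.lookup q (k - l))"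
    by (rule Sum_any.expand_superset) (auto simp: in_keys_iff)
  finally show ?thesis .
qed

lemma lookup_mem_monoid_sr: "p \<in> monoid_sr S \<Longrightarrow> Poly_Mapping.lookup p g \<in> S"
  by (simp add: monoid_sr_def)

lemma single_mem_monoid_sr: "semidomain S \<Longrightarrow> a \<in> S \<Longrightarrow> Poly_Mapping.single g a \<in> monoid_sr S"
  by (auto simp: monoid_sr_def lookup_single when_def semidomain_def)

lemma add_mem_monoid_sr: "semidomain S \<Longrightarrow> p \<in> monoid_sr S \<Longrightarrow> q \<in> monoid_sr S \<Longrightarrow> p + q \<in> monoid_sr S"
  by (simp add: monoid_sr_def lookup_add semidomain_def)

lemma keys_mult_monoid_sr:
  fixes p q :: "'g::ab_group_add \<Rightarrow>\<^sub>0 'a::idom"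
  assumes S: "semidomain S" "add_reduced S" and p: "p \<in> monoid_sr S" and q: "q \<in> monoid_sr S"
  shows "Poly_Mapping.keys (p * q) =
    {l + r | l r. l \<in> Poly_Mapping.keys p \<and> r \<in> Poly_Mapping.keys q}"
proof
  show "Poly_Mapping.keys (p * q) \<subseteq> {l + r | l r. l \<in> Poly_Mapping.keys p \<and> r \<in> Poly_Mapping.keys q}"
    by (rule keys_mult)
next
  show "{l + r | l r. l \<in> Poly_Mapping.keys p \<and> r \<in> Poly_Mapping.keys q} \<subseteq> Poly_Mapping.keys (p * q)"
  proof clarify
    fix l r assume l: "l \<in> Poly_Mapping.keys p" and r: "r \<in> Poly_Mapping.keys q"
    have "(\<Sum>l'\<in>Poly_Mapping.keys p. Poly_Mapping.lookup p l' * Poly_Mapping.lookup q (l + r - l')) \<noteq> 0"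
      using l r S p q
      by (subst add_reduced_sum_eq_0_iff)
        (auto simp: in_keys_iff semidomain_def lookup_mem_monoid_sr intro!: bexI[of _ l])
    then show "l + r \<in> Poly_Mapping.keys (p * q)"
      by (simp add: in_keys_iff lookup_mult_ab_group)
  qed
qed

lemma mult_mem_keys_monoid_sr:
  fixes p q :: "'g::ab_group_add \<Rightarrow>\<^sub>0 'a::idom"
  assumes "semidomain S" "add_reduced S" "p \<in> monoid_sr S" "q \<in> monoid_sr S"
    and "l \<in> Poly_Mapping.keys p" "r \<in> Poly_Mapping.keys q"
  shows "l + r \<in> Poly_Mapping.keys (p * q)"
  using assms by (auto simp: keys_mult_monoid_sr)

lemma lookup_mult_not_add_atom:
  fixes p q :: "'g::ab_group_add \<Rightarrow>\<^sub>0 'a::idom"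
  assumes S: "semidomain S" "add_reduced S" and p: "p \<in> monoid_sr S" and q: "q \<in> monoid_sr S"
    and l: "l\<^sub>1 \<in> Poly_Mapping.keys p" "l\<^sub>2 \<in> Poly_Mapping.keys p" "l\<^sub>1 \<noteq> l\<^sub>2"
    and r: "k - l\<^sub>1 \<in> Poly_Mapping.keys q" "k - l\<^sub>2 \<in> Poly_Mapping.keys q"
  shows "Poly_Mapping.lookup (p * q) k \<notin> add_atoms S"
proof -
  define t where "t l = Poly_Mapping.lookup p l * Poly_Mapping.lookup q (k - l)" for l
  have t_mem: "t l \<in> S" for l
    using S p q by (simp add: t_def semidomain_def lookup_mem_monoid_sr)
  have "Poly_Mapping.lookup (p * q) k = t l\<^sub>1 + sum t (Poly_Mapping.keys p - {l\<^sub>1})"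
    using l(1) by (simp add: lookup_mult_ab_group t_def sum.remove)
  moreover have "t l\<^sub>1 \<noteq> 0" "t l\<^sub>2 \<noteq> 0"
    using l r by (simp_all add: t_def in_keys_iff)
  moreover from this(2) have "sum t (Poly_Mapping.keys p - {l\<^sub>1}) \<noteq> 0"
    using l by (subst add_reduced_sum_eq_0_iff[OF S]) (auto simp: t_mem)
  moreover have "sum t (Poly_Mapping.keys p - {l\<^sub>1}) \<in> S"
    by (rule sum_mem_semidomain[OF S(1) t_mem])
  ultimately show ?thesis
    using t_mem unfolding add_atoms_def by blast
qed

section \<open>Units and irreducibility in \<open>S[G]\<close>\<close>

lemma unit_sr_keys_is_singleton:
  fixes u :: "'g::ab_group_add \<Rightarrow>\<^sub>0 'a::idom"
  assumes S: "semidomain S" "add_reduced S" and u: "unit_sr S u"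
  shows "is_singleton (Poly_Mapping.keys u)"
proof -
  obtain v where v: "v \<in> monoid_sr S" "u * v = 1"
    using u unfolding unit_sr_def by blast
  then have "u \<noteq> 0" "v \<noteq> 0" by auto
  then obtain r where r: "r \<in> Poly_Mapping.keys v" by fastforce
  have "l = - r" if "l \<in> Poly_Mapping.keys u" for l
    using mult_mem_keys_monoid_sr[OF S _ v(1) that r] u v(2)
    by (simp add: unit_sr_def eq_neg_iff_add_eq_0)
  then show ?thesis
    using \<open>u \<noteq> 0\<close> by (intro is_singletonI') auto
qed

lemma unit_sr_if_monomial_factor:
  fixes p q :: "'g::ab_group_add \<Rightarrow>\<^sub>0 'a::idom"
  assumes S: "semidomain S" and p: "p \<in> monoid_sr S" and q: "q \<in> monoid_sr S"
    and p_keys: "Poly_Mapping.keys p = {h}" and unit: "Poly_Mapping.lookup (p * q) c \<in> sunits S"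
  shows "unit_sr S p"
proof -
  define a where "a = Poly_Mapping.lookup p h"
  have p_eq: "p = Poly_Mapping.single h a"
    by (rule poly_mapping_eqI) (use p_keys in \<open>auto simp: a_def lookup_single when_def in_keys_iff\<close>)
  have "Poly_Mapping.lookup (p * q) c = a * Poly_Mapping.lookup q (c - h)"
    by (simp add: p_eq lookup_mult_ab_group)
  with unit obtain v where v: "v \<in> S" "a * Poly_Mapping.lookup q (c - h) * v = 1"
    unfolding sunits_def by auto
  define w where "w = Poly_Mapping.lookup q (c - h) * v"
  have "w \<in> S" using S v q by (simp add: w_def semidomain_def lookup_mem_monoid_sr)
  moreover have "p * Poly_Mapping.single (- h) w = 1"
    using v by (simp add: p_eq mult_single w_def mult.assoc)
  ultimately show ?thesis
    using p single_mem_monoid_sr[OF S] unfolding unit_sr_def by blast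
qed

lemma irreducible_srI:
  fixes f :: "'g::ab_group_add \<Rightarrow>\<^sub>0 'a::idom"
  assumes S: "semidomain S" "add_reduced S" and f: "f \<in> monoid_sr S" "f \<noteq> 0"
    and f_keys: "\<not> is_singleton (Poly_Mapping.keys f)"
    and unit: "Poly_Mapping.lookup f c \<in> sunits S"
    and factors: "\<And>p q. p \<in> monoid_sr S \<Longrightarrow> q \<in> monoid_sr S \<Longrightarrow> f = p * q \<Longrightarrow>
      is_singleton (Poly_Mapping.keys p) \<or> is_singleton (Poly_Mapping.keys q)"
  shows "irreducible_sr S f"
  unfolding irreducible_sr_def
proof (intro conjI ballI impI)
  show "\<not> unit_sr S f"
    using unit_sr_keys_is_singleton[OF S] f_keys by blast
  fix p q assume p: "p \<in> monoid_sr S" and q: "q \<in> monoid_sr S" and f_eq: "f = p * q"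
  from factors[OF this] show "unit_sr S p \<or> unit_sr S q"
  proof
    assume "is_singleton (Poly_Mapping.keys p)"
    then obtain h where "Poly_Mapping.keys p = {h}" by (auto simp: is_singleton_def)
    then show ?thesis using unit_sr_if_monomial_factor[OF S(1) p q] unit f_eq by blast
  next
    assume "is_singleton (Poly_Mapping.keys q)"
    then obtain h where "Poly_Mapping.keys q = {h}" by (auto simp: is_singleton_def)
    then show ?thesis using unit_sr_if_monomial_factor[OF S(1) q p] unit f_eq
      by (simp add: mult.commute)
  qed
qed (use f in auto)

lemma not_is_singleton_obtains_less:
  fixes A :: "'a::linorder set"
  assumes "A \<noteq> {}" and "\<not> is_singleton A"
  obtains a b where "a \<in> A" "b \<in> A" "a < b"
  using assms is_singletonI' by (metis linorder_neqE)

lemma keys_factors_obtain_chain: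
  fixes p q :: "'g::linordered_ab_group_add \<Rightarrow>\<^sub>0 'a::idom"
  assumes S: "semidomain S" "add_reduced S" and p: "p \<in> monoid_sr S" and q: "q \<in> monoid_sr S"
    and "p * q \<noteq> 0"
    and "\<not> is_singleton (Poly_Mapping.keys p)" and "\<not> is_singleton (Poly_Mapping.keys q)"
  obtains l\<^sub>1 l\<^sub>2 r\<^sub>1 r\<^sub>2 where
    "l\<^sub>1 \<in> Poly_Mapping.keys p" "l\<^sub>2 \<in> Poly_Mapping.keys p" "l\<^sub>1 < l\<^sub>2"
    "r\<^sub>1 \<in> Poly_Mapping.keys q" "r\<^sub>2 \<in> Poly_Mapping.keys q" "r\<^sub>1 < r\<^sub>2"
    "l\<^sub>1 + r\<^sub>1 \<in> Poly_Mapping.keys (p * q)" "l\<^sub>1 + r\<^sub>2 \<in> Poly_Mapping.keys (p * q)"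
    "l\<^sub>2 + r\<^sub>1 \<in> Poly_Mapping.keys (p * q)" "l\<^sub>2 + r\<^sub>2 \<in> Poly_Mapping.keys (p * q)"
proof -
  have "p \<noteq> 0" "q \<noteq> 0" using \<open>p * q \<noteq> 0\<close> by auto
  then show thesis
    using assms(6,7) that mult_mem_keys_monoid_sr[OF S p q]
    by (metis keys_eq_empty not_is_singleton_obtains_less)
qed

section \<open>Binomials and trinomials\<close>

lemma chain_in_three_middle:
  fixes a b c x y z :: "'a::linorder"
  assumes "z < y" "y < x" "a \<in> {x, y, z}" "b \<in> {x, y, z}" "c \<in> {x, y, z}" "a < b" "b < c"
  shows "b = y"
  using assms by auto

lemma irreducible_sr_binomial:
  fixes x y :: "'g::linordered_ab_group_add" and a b :: "'a::idom"
  assumes S: "semidomain S" "add_reduced S"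
    and a: "a \<in> S - {0}" and b: "b \<in> S - {0}" and unit: "a \<in> sunits S \<or> b \<in> sunits S"
    and "y < x"
  shows "irreducible_sr S (Poly_Mapping.single x a + Poly_Mapping.single y b)"
    (is "irreducible_sr S ?f")
proof -
  have lookup: "Poly_Mapping.lookup ?f k = (if k = x then a else if k = y then b else 0)" for k
    using \<open>y < x\<close> by (auto simp: lookup_add lookup_single when_def)
  then have keys: "Poly_Mapping.keys ?f = {x, y}"
    using a b \<open>y < x\<close> by (auto simp: in_keys_iff split: if_splits)
  obtain c where c: "Poly_Mapping.lookup ?f c \<in> sunits S"
    using unit lookup[of x] lookup[of y] \<open>y < x\<close> by (metis less_irrefl)
  show ?thesis
  proof (rule irreducible_srI[OF S _ _ _ c])
    show "?f \<in> monoid_sr S"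
      using S a b by (simp add: add_mem_monoid_sr single_mem_monoid_sr)
    show "?f \<noteq> 0" "\<not> is_singleton (Poly_Mapping.keys ?f)"
      using keys \<open>y < x\<close> by (auto simp: is_singleton_def doubleton_eq_iff)
  next
    fix p q assume p: "p \<in> monoid_sr S" and q: "q \<in> monoid_sr S" and f_eq: "?f = p * q"
    show "is_singleton (Poly_Mapping.keys p) \<or> is_singleton (Poly_Mapping.keys q)"
    proof (rule ccontr)
      assume "\<not> ?thesis"
      with keys_factors_obtain_chain[OF S p q] obtain l\<^sub>1 l\<^sub>2 r\<^sub>1 r\<^sub>2 where
        "l\<^sub>1 < l\<^sub>2" "r\<^sub>1 < r\<^sub>2"
        "l\<^sub>1 + r\<^sub>1 \<in> {x, y}" "l\<^sub>1 + r\<^sub>2 \<in> {x, y}" "l\<^sub>2 + r\<^sub>2 \<in> {x, y}"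
        using keys f_eq by (metis empty_iff insert_iff keys_eq_empty)
      moreover from this(1,2) have "l\<^sub>1 + r\<^sub>1 < l\<^sub>1 + r\<^sub>2" "l\<^sub>1 + r\<^sub>2 < l\<^sub>2 + r\<^sub>2"
        by simp_all
      ultimately show False by (metis insert_iff singletonD less_irrefl order.strict_trans)
    qed
  qed
qed

lemma irreducible_sr_trinomial:
  fixes x y z :: "'g::linordered_ab_group_add" and a b c :: "'a::idom"
  assumes S: "semidomain S" "add_reduced S"
    and a: "a \<in> S - {0}" and b: "b \<in> S - {0}" and c: "c \<in> S - {0}"
    and b_unit: "b \<in> sunits S" and b_atom: "b \<in> add_atoms S"
    and "z < y" and "y < x"
  shows "irreducible_sr S (Poly_Mapping.single x a + Poly_Mapping.single y b + Poly_Mapping.single z c)"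
    (is "irreducible_sr S ?f")
proof -
  have lookup: "Poly_Mapping.lookup ?f k =
      (if k = x then a else if k = y then b else if k = z then c else 0)" for k
    using \<open>z < y\<close> \<open>y < x\<close> by (auto simp: lookup_add lookup_single when_def)
  then have keys: "Poly_Mapping.keys ?f = {x, y, z}"
    using a b c \<open>z < y\<close> \<open>y < x\<close> by (auto simp: in_keys_iff split: if_splits)
  have middle: "Poly_Mapping.lookup ?f y = b"
    using lookup[of y] \<open>y < x\<close> by auto
  show ?thesis
  proof (rule irreducible_srI[OF S])
    show "?f \<in> monoid_sr S"
      using S a b c by (simp add: add_mem_monoid_sr single_mem_monoid_sr)
    show "?f \<noteq> 0" "\<not> is_singleton (Poly_Mapping.keys ?f)"
      using keys \<open>z < y\<close> \<open>y < x\<close> by (auto simp: is_singleton_def)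
    show "Poly_Mapping.lookup ?f y \<in> sunits S"
      using middle b_unit by simp
  next
    fix p q assume p: "p \<in> monoid_sr S" and q: "q \<in> monoid_sr S" and f_eq: "?f = p * q"
    show "is_singleton (Poly_Mapping.keys p) \<or> is_singleton (Poly_Mapping.keys q)"
    proof (rule ccontr)
      assume "\<not> ?thesis"
      with keys_factors_obtain_chain[OF S p q] obtain l\<^sub>1 l\<^sub>2 r\<^sub>1 r\<^sub>2 where
        l: "l\<^sub>1 \<in> Poly_Mapping.keys p" "l\<^sub>2 \<in> Poly_Mapping.keys p" "l\<^sub>1 < l\<^sub>2" and
        r: "r\<^sub>1 \<in> Poly_Mapping.keys q" "r\<^sub>2 \<in> Poly_Mapping.keys q" "r\<^sub>1 < r\<^sub>2" and
        chain: "l\<^sub>1 + r\<^sub>1 \<in> {x, y, z}" "l\<^sub>1 + r\<^sub>2 \<in> {x, y, z}"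
          "l\<^sub>2 + r\<^sub>1 \<in> {x, y, z}" "l\<^sub>2 + r\<^sub>2 \<in> {x, y, z}"
        using keys f_eq by (metis empty_iff insert_iff keys_eq_empty)
      have "l\<^sub>1 + r\<^sub>1 < l\<^sub>1 + r\<^sub>2" "l\<^sub>1 + r\<^sub>2 < l\<^sub>2 + r\<^sub>2"
        "l\<^sub>1 + r\<^sub>1 < l\<^sub>2 + r\<^sub>1" "l\<^sub>2 + r\<^sub>1 < l\<^sub>2 + r\<^sub>2"
        using l(3) r(3) by simp_all
      then have "l\<^sub>1 + r\<^sub>2 = y" "l\<^sub>2 + r\<^sub>1 = y"
        using chain chain_in_three_middle[OF \<open>z < y\<close> \<open>y < x\<close>] by blast+
      then have "y - l\<^sub>1 = r\<^sub>2" "y - l\<^sub>2 = r\<^sub>1"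
        by (auto simp: diff_eq_eq add.commute)
      then have "y - l\<^sub>1 \<in> Poly_Mapping.keys q" "y - l\<^sub>2 \<in> Poly_Mapping.keys q"
        using r by simp_all
      then have "Poly_Mapping.lookup (p * q) y \<notin> add_atoms S"
        using lookup_mult_not_add_atom[OF S p q l(1,2)] l(3) by blast
      then show False using b_atom middle unfolding f_eq by simp
    qed
  qed
qed

lemma sunits_subset: "sunits S \<subseteq> S - {0}"
  by (auto simp: sunits_def)

lemma trinomial_sum_of_irreducibles_if_middle_nonunit:
  fixes s\<^sub>0 s\<^sub>1 s\<^sub>2 :: "'a::idom" and g\<^sub>0 g\<^sub>1 g\<^sub>2 :: "'g::linordered_ab_group_add"
  assumes S: "semidomain S" "add_reduced S" "add_furstenberg S" "add_atoms S = sunits S"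
    and s: "s\<^sub>0 \<in> S - {0}" "s\<^sub>1 \<in> S - {0}" "s\<^sub>2 \<in> S - {0}"
    and g: "g\<^sub>1 < g\<^sub>0" "g\<^sub>2 < g\<^sub>1"
    and "s\<^sub>1 \<notin> sunits S"
  shows "\<exists>p q. irreducible_sr S p \<and> irreducible_sr S q \<and>
    Poly_Mapping.single g\<^sub>0 s\<^sub>0 + Poly_Mapping.single g\<^sub>1 s\<^sub>1 + Poly_Mapping.single g\<^sub>2 s\<^sub>2 = p + q"
proof -
  obtain u\<^sub>1 t\<^sub>1 where u\<^sub>1: "u\<^sub>1 \<in> sunits S" and t\<^sub>1: "t\<^sub>1 \<in> S - {0}" and s\<^sub>1: "s\<^sub>1 = u\<^sub>1 + t\<^sub>1"
    using add_furstenberg_split_off_unit[OF S(3,4) s(2) \<open>s\<^sub>1 \<notin> sunits S\<close>] .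
  show ?thesis
  proof (cases "s\<^sub>0 \<in> sunits S")
    case True
    have "irreducible_sr S (Poly_Mapping.single g\<^sub>0 s\<^sub>0 + Poly_Mapping.single g\<^sub>1 t\<^sub>1)"
      using irreducible_sr_binomial[OF S(1,2) s(1) t\<^sub>1 _ g(1)] True by blast
    moreover have "irreducible_sr S (Poly_Mapping.single g\<^sub>1 u\<^sub>1 + Poly_Mapping.single g\<^sub>2 s\<^sub>2)"
      using irreducible_sr_binomial[OF S(1,2) _ s(3) _ g(2)] u\<^sub>1 sunits_subset by blast
    moreover have "Poly_Mapping.single g\<^sub>0 s\<^sub>0 + Poly_Mapping.single g\<^sub>1 s\<^sub>1 + Poly_Mapping.single g\<^sub>2 s\<^sub>2 =
        (Poly_Mapping.single g\<^sub>0 s\<^sub>0 + Poly_Mapping.single g\<^sub>1 t\<^sub>1) +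
        (Poly_Mapping.single g\<^sub>1 u\<^sub>1 + Poly_Mapping.single g\<^sub>2 s\<^sub>2)"
      unfolding s\<^sub>1 single_add by (simp add: ac_simps)
    ultimately show ?thesis by blast
  next
    case False
    obtain u\<^sub>0 t\<^sub>0 where u\<^sub>0: "u\<^sub>0 \<in> sunits S" and t\<^sub>0: "t\<^sub>0 \<in> S - {0}" and s\<^sub>0: "s\<^sub>0 = u\<^sub>0 + t\<^sub>0"
      using add_furstenberg_split_off_unit[OF S(3,4) s(1) False] .
    have "irreducible_sr S
        (Poly_Mapping.single g\<^sub>0 t\<^sub>0 + Poly_Mapping.single g\<^sub>1 u\<^sub>1 + Poly_Mapping.single g\<^sub>2 s\<^sub>2)"
      using irreducible_sr_trinomial[OF S(1,2) t\<^sub>0 _ s(3) u\<^sub>1 _ g(2,1)] u\<^sub>1 sunits_subset S(4)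
      by blast
    moreover have "irreducible_sr S (Poly_Mapping.single g\<^sub>0 u\<^sub>0 + Poly_Mapping.single g\<^sub>1 t\<^sub>1)"
      using irreducible_sr_binomial[OF S(1,2) _ t\<^sub>1 _ g(1)] u\<^sub>0 sunits_subset by blast
    moreover have "Poly_Mapping.single g\<^sub>0 s\<^sub>0 + Poly_Mapping.single g\<^sub>1 s\<^sub>1 + Poly_Mapping.single g\<^sub>2 s\<^sub>2 =
        (Poly_Mapping.single g\<^sub>0 t\<^sub>0 + Poly_Mapping.single g\<^sub>1 u\<^sub>1 + Poly_Mapping.single g\<^sub>2 s\<^sub>2) +
        (Poly_Mapping.single g\<^sub>0 u\<^sub>0 + Poly_Mapping.single g\<^sub>1 t\<^sub>1)"
      unfolding s\<^sub>0 s\<^sub>1 single_add by (simp add: ac_simps)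
    ultimately show ?thesis by blast
  qed
qed

lemma trinomial_sum_of_irreducibles_if_middle_unit:
  fixes s\<^sub>0 s\<^sub>1 s\<^sub>2 :: "'a::idom" and g\<^sub>0 g\<^sub>1 g\<^sub>2 :: "'g::linordered_ab_group_add"
  assumes S: "semidomain S" "add_reduced S" "add_furstenberg S" "add_atoms S = sunits S"
    and s: "s\<^sub>0 \<in> S - {0}" "s\<^sub>1 \<in> S - {0}" "s\<^sub>2 \<in> S - {0}"
    and g: "g\<^sub>1 < g\<^sub>0" "g\<^sub>2 < g\<^sub>1"
    and "s\<^sub>1 \<in> sunits S" and not_units: "\<not> (s\<^sub>0 \<in> sunits S \<and> s\<^sub>2 \<in> sunits S)"
  shows "\<exists>p q. irreducible_sr S p \<and> irreducible_sr S q \<and>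
    Poly_Mapping.single g\<^sub>0 s\<^sub>0 + Poly_Mapping.single g\<^sub>1 s\<^sub>1 + Poly_Mapping.single g\<^sub>2 s\<^sub>2 = p + q"
proof (cases "s\<^sub>0 \<in> sunits S")
  case False
  obtain u\<^sub>0 t\<^sub>0 where u\<^sub>0: "u\<^sub>0 \<in> sunits S" and t\<^sub>0: "t\<^sub>0 \<in> S - {0}" and s\<^sub>0: "s\<^sub>0 = u\<^sub>0 + t\<^sub>0"
    using add_furstenberg_split_off_unit[OF S(3,4) s(1) False] .
  have "irreducible_sr S (Poly_Mapping.single g\<^sub>0 t\<^sub>0 + Poly_Mapping.single g\<^sub>1 s\<^sub>1)"
    using irreducible_sr_binomial[OF S(1,2) t\<^sub>0 s(2) _ g(1)] \<open>s\<^sub>1 \<in> sunits S\<close> by blast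
  moreover have "irreducible_sr S (Poly_Mapping.single g\<^sub>0 u\<^sub>0 + Poly_Mapping.single g\<^sub>2 s\<^sub>2)"
    using irreducible_sr_binomial[OF S(1,2) _ s(3) _ order.strict_trans[OF g(2,1)]] u\<^sub>0 sunits_subset
    by blast
  moreover have "Poly_Mapping.single g\<^sub>0 s\<^sub>0 + Poly_Mapping.single g\<^sub>1 s\<^sub>1 + Poly_Mapping.single g\<^sub>2 s\<^sub>2 =
      (Poly_Mapping.single g\<^sub>0 t\<^sub>0 + Poly_Mapping.single g\<^sub>1 s\<^sub>1) +
      (Poly_Mapping.single g\<^sub>0 u\<^sub>0 + Poly_Mapping.single g\<^sub>2 s\<^sub>2)"
    unfolding s\<^sub>0 single_add by (simp add: ac_simps)
  ultimately show ?thesis by blast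
next
  case True
  with not_units have "s\<^sub>2 \<notin> sunits S" by blast
  then obtain u\<^sub>2 t\<^sub>2 where u\<^sub>2: "u\<^sub>2 \<in> sunits S" and t\<^sub>2: "t\<^sub>2 \<in> S - {0}" and s\<^sub>2: "s\<^sub>2 = u\<^sub>2 + t\<^sub>2"
    using add_furstenberg_split_off_unit[OF S(3,4) s(3)] by blast
  have "irreducible_sr S (Poly_Mapping.single g\<^sub>0 s\<^sub>0 + Poly_Mapping.single g\<^sub>2 u\<^sub>2)"
    using irreducible_sr_binomial[OF S(1,2) s(1) _ _ order.strict_trans[OF g(2,1)]] True u\<^sub>2 sunits_subset
    by blast
  moreover have "irreducible_sr S (Poly_Mapping.single g\<^sub>1 s\<^sub>1 + Poly_Mapping.single g\<^sub>2 t\<^sub>2)"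
    using irreducible_sr_binomial[OF S(1,2) s(2) t\<^sub>2 _ g(2)] \<open>s\<^sub>1 \<in> sunits S\<close> by blast
  moreover have "Poly_Mapping.single g\<^sub>0 s\<^sub>0 + Poly_Mapping.single g\<^sub>1 s\<^sub>1 + Poly_Mapping.single g\<^sub>2 s\<^sub>2 =
      (Poly_Mapping.single g\<^sub>0 s\<^sub>0 + Poly_Mapping.single g\<^sub>2 u\<^sub>2) +
      (Poly_Mapping.single g\<^sub>1 s\<^sub>1 + Poly_Mapping.single g\<^sub>2 t\<^sub>2)"
    unfolding s\<^sub>2 single_add by (simp add: ac_simps)
  ultimately show ?thesis by blast
qed

theorem lemma3p5:
  fixes S :: "'a::idom set"
    and s0 s1 s2 :: 'a
    and g0 g1 g2 :: "'g::linordered_ab_group_add"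
  assumes "semidomain S" and "add_reduced S" and "add_furstenberg S"
    and "add_atoms S = sunits S"
    and "s0 \<in> S - {0}" and "s1 \<in> S - {0}" and "s2 \<in> S - {0}"
    and "g1 < g0" and "g2 < g1"
  shows "(s0 \<in> sunits S \<and> s1 \<in> sunits S \<and> s2 \<in> sunits S \<longrightarrow>
            irreducible_sr S (Poly_Mapping.single g0 s0 + Poly_Mapping.single g1 s1
                              + Poly_Mapping.single g2 s2))
       \<and> (\<not> (s0 \<in> sunits S \<and> s1 \<in> sunits S \<and> s2 \<in> sunits S) \<longrightarrow>
            (\<exists>p q. irreducible_sr S p \<and> irreducible_sr S q \<and>
               Poly_Mapping.single g0 s0 + Poly_Mapping.single g1 s1
                 + Poly_Mapping.single g2 s2 = p + q))"
proof (intro conjI impI)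
  assume "s0 \<in> sunits S \<and> s1 \<in> sunits S \<and> s2 \<in> sunits S"
  then show "irreducible_sr S
      (Poly_Mapping.single g0 s0 + Poly_Mapping.single g1 s1 + Poly_Mapping.single g2 s2)"
    using irreducible_sr_trinomial[OF assms(1,2,5,6,7) _ _ assms(9,8)] assms(4) by blast
next
  assume "\<not> (s0 \<in> sunits S \<and> s1 \<in> sunits S \<and> s2 \<in> sunits S)"
  then show "\<exists>p q. irreducible_sr S p \<and> irreducible_sr S q \<and>
      Poly_Mapping.single g0 s0 + Poly_Mapping.single g1 s1 + Poly_Mapping.single g2 s2 = p + q"
    using trinomial_sum_of_irreducibles_if_middle_nonunit[OF assms]
      trinomial_sum_of_irreducibles_if_middle_unit[OF assms]
    by blast
qed

end
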